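(* With the notation below, if $\Xi_{ijk}>0$, then the three lengths $l_{ij},l_{jk},l_{ki}$ satisfy the strict triangle inequalities, and the orthogonal circle of the resulting hyperbolic triangle is compact. In particular, for a triangulation $\mathcal T$, the set $\Xi(\mathcal T)$ of $(\mathbf I,\mathbf r)\in\mathbb R^{E(\mathcal T)}_{>1}\times\mathbb R^V_{>0}$ with $\Xi_{ijk}>0$ for every face $f_{ijk}$ is contained in $Q_h(\mathcal T)$.
   Context: For a face $f_{ijk}$ with radii $r_i,r_j,r_k>0$ at its vertices and inversive distances $a=I_{jk},b=I_{ki},c=I_{ij}>1$ on its edges, set $p=\cosh r_i,q=\cosh r_j,r=\cosh r_k$, $x=\cosh l_{jk}=qr+a\sinh r_j\sinh r_k$, $y=\cosh l_{ki}=rp+b\sinh r_k\sinh r_i$, $z=\cosh l_{ij}=pq+c\sinh r_i\sinh r_j$, and $$\Xi_{ijk}=p^2(1-x^2)+q^2(1-y^2)+r^2(1-z^2)+2pq(xy-z)+2pr(xz-y)+2qr(yz-x).$$ Orthogonal circle: embed the triangle isometrically in the Poincaré disk $\mathbb D\subset\mathbb R^2$; the hyperbolic vertex circles are Euclidean circles, and the orthogonal circle is the unique Euclidean circle orthogonal to all three; it is compact if it lies in the open disk $\mathbb D$. $Q_h(\mathcal T)$ is the set of $(\mathbf I,\mathbf r)$ whose lengths $l_{ij}=\operatorname{arccosh}(\cosh r_i\cosh r_j+I_{ij}\sinh r_i\sinh r_j)$ satisfy strict triangle inequalities on every face of the triangulation $\mathcal T$ (a $\Delta$-complex triangulation of a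 marked closed surface $(S,V)$). *)

theory Defs
  imports "HOL-Analysis.Analysis"
begin

definition inv_len :: "real \<Rightarrow> real \<Rightarrow> real \<Rightarrow> real" where
  "inv_len ri rj I = arcosh (cosh ri * cosh rj + I * sinh ri * sinh rj)"

text \<open>The quantity Xi_ijk; a = I_jk, b = I_ki, c = I_ij.\<close>
definition Xi :: "real \<Rightarrow> real \<Rightarrow> real \<Rightarrow> real \<Rightarrow> real \<Rightarrow> real \<Rightarrow> real" where
  "Xi ri rj rk a b c =
    (let p = cosh ri; q = cosh rj; r = cosh rk;
         x = q * r + a * sinh rj * sinh rk;
         y = r * p + b * sinh rk * sinh ri;
         z = p * q + c * sinh ri * sinh rj
     in p^2 * (1 - x^2) + q^2 * (1 - y^2) + r^2 * (1 - z^2)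
        + 2*p*q*(x*y - z) + 2*p*r*(x*z - y) + 2*q*r*(y*z - x))"

definition strict_tri :: "real \<Rightarrow> real \<Rightarrow> real \<Rightarrow> bool" where
  "strict_tri l1 l2 l3 \<longleftrightarrow> l1 < l2 + l3 \<and> l2 < l1 + l3 \<and> l3 < l1 + l2"

definition pdisk :: "complex set" where
  "pdisk = ball 0 1"

definition hdist :: "complex \<Rightarrow> complex \<Rightarrow> real" where
  "hdist z w = arcosh (1 + 2 * (cmod (z - w))^2 / ((1 - (cmod z)^2) * (1 - (cmod w)^2)))"

definition hcircle :: "complex \<Rightarrow> real \<Rightarrow> complex set" where
  "hcircle c \<rho> = {z \<in> pdisk. hdist c z = \<rho>}"

definition orth_circ :: "complex \<Rightarrow> real \<Rightarrow> complex \<Rightarrow> real \<Rightarrow> bool" where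
  "orth_circ o1 R1 o2 R2 \<longleftrightarrow> (cmod (o1 - o2))^2 = R1^2 + R2^2"

definition is_orthogonal_circle ::
  "complex \<Rightarrow> complex \<Rightarrow> complex \<Rightarrow> real \<Rightarrow> real \<Rightarrow> real \<Rightarrow> complex \<Rightarrow> real \<Rightarrow> bool" where
  "is_orthogonal_circle zi zj zk ri rj rk oc R \<longleftrightarrow> R > 0 \<and>
     (\<forall>a s. s > 0 \<and> sphere a s = hcircle zi ri \<longrightarrow> orth_circ oc R a s) \<and>
     (\<forall>a s. s > 0 \<and> sphere a s = hcircle zj rj \<longrightarrow> orth_circ oc R a s) \<and>
     (\<forall>a s. s > 0 \<and> sphere a s = hcircle zk rk \<longrightarrow> orth_circ oc R a s)"

text \<open>Triangulation data: faces F; for a face f, vertex n (n = 0,1,2) is fv f n and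
  the edge opposite to vertex n is fe f n.  (A Delta-complex triangulation of a
  marked surface gives such data.)\<close>
definition face_Xi :: "('f \<Rightarrow> nat \<Rightarrow> 'v) \<Rightarrow> ('f \<Rightarrow> nat \<Rightarrow> 'e) \<Rightarrow> ('e \<Rightarrow> real) \<Rightarrow> ('v \<Rightarrow> real) \<Rightarrow> 'f \<Rightarrow> real" where
  "face_Xi fv fe I r f = Xi (r (fv f 0)) (r (fv f 1)) (r (fv f 2)) (I (fe f 0)) (I (fe f 1)) (I (fe f 2))"

definition Xi_set :: "'f set \<Rightarrow> ('f \<Rightarrow> nat \<Rightarrow> 'v) \<Rightarrow> ('f \<Rightarrow> nat \<Rightarrow> 'e) \<Rightarrow> 'e set \<Rightarrow> 'v set
    \<Rightarrow> (('e \<Rightarrow> real) \<times> ('v \<Rightarrow> real)) set" where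
  "Xi_set F fv fe E V = {(I, r). (\<forall>e\<in>E. I e > 1) \<and> (\<forall>v\<in>V. r v > 0) \<and>
      (\<forall>f\<in>F. face_Xi fv fe I r f > 0)}"

definition Q_h :: "'f set \<Rightarrow> ('f \<Rightarrow> nat \<Rightarrow> 'v) \<Rightarrow> ('f \<Rightarrow> nat \<Rightarrow> 'e) \<Rightarrow> 'e set \<Rightarrow> 'v set
    \<Rightarrow> (('e \<Rightarrow> real) \<times> ('v \<Rightarrow> real)) set" where
  "Q_h F fv fe E V = {(I, r). (\<forall>e\<in>E. I e > 1) \<and> (\<forall>v\<in>V. r v > 0) \<and>
      (\<forall>f\<in>F. strict_tri (inv_len (r (fv f 0)) (r (fv f 1)) (I (fe f 2)))
                         (inv_len (r (fv f 1)) (r (fv f 2)) (I (fe f 0)))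
                         (inv_len (r (fv f 2)) (r (fv f 0)) (I (fe f 1))))}"

end

theory Submission
  imports Defs
begin

text \<open>Lift the Poincare disk to the hyperboloid {u. <u, u> = -1} in Minkowski space, so that the
  vertices become vectors v_i with <v_i, v_j> = -cosh l_ij. For the Gram matrix G of the
  cosh l_ij and w = (cosh r_i), the vector Y = \<Sum> (adj(G) w)_i v_i satisfies
  <Y, v_i> = -det G cosh r_i and <Y, Y> = -det G \<Xi>, while det G - \<Xi> is a positive multiple of
  a^2 + b^2 + c^2 + 2abc - 1. Hence \<Xi> > 0 gives det G > \<Xi> > 0. Positivity of det G is
  the triangle inequality for the lengths. Normalising Y gives a point of the hyperbolic plane whose
  circle of radius arcosh (sqrt (det G / \<Xi>)) meets each vertex circle orthogonally, since
  orthogonality of hyperbolic circles means cosh d = cosh \<rho> cosh \<sigma>. Being a hyperbolic circle,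
  it lies inside the disk; it is the only orthogonal circle because orthogonality to a vertex circle
  is a Lorentz-linear condition on the coefficient vector of a Euclidean circle, and the v_i are
  linearly independent.\<close>

section \<open>Minkowski space\<close>

definition lorentz :: "real \<times> real \<times> real \<Rightarrow> real \<times> real \<times> real \<Rightarrow> real" where
  "lorentz u v = fst u * fst v + fst (snd u) * fst (snd v) - snd (snd u) * snd (snd v)"

lemma lorentz_Pair [simp]: "lorentz (a, b, t) (a', b', t') = a * a' + b * b' - t * t'"
  by (simp add: lorentz_def)

lemma lorentz_commute: "lorentz u v = lorentz v u"
  by (simp add: lorentz_def algebra_simps)

lemma lorentz_add_left: "lorentz (u + v) w = lorentz u w + lorentz v w"
  by (simp add: lorentz_def algebra_simps)

lemma lorentz_diff_left: "lorentz (u - v) w = lorentz u w - lorentz v w"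
  by (simp add: lorentz_def algebra_simps)

lemma lorentz_scaleR_left: "lorentz (c *\<^sub>R u) w = c * lorentz u w"
  by (simp add: lorentz_def algebra_simps)

lemma lorentz_scaleR_right: "lorentz u (c *\<^sub>R w) = c * lorentz u w"
  by (simp add: lorentz_def algebra_simps)

definition hyperboloid :: "(real \<times> real \<times> real) set" where
  "hyperboloid = {u. lorentz u u = -1 \<and> snd (snd u) > 0}"

lemma hyperboloid_Pair: "(a, b, t) \<in> hyperboloid \<longleftrightarrow> a^2 + b^2 = t^2 - 1 \<and> t > 0"
  by (auto simp: hyperboloid_def power2_eq_square)

lemma time_pos_if_lorentz_neg:
  assumes timelike: "lorentz u u < 0" and v: "v \<in> hyperboloid" and neg: "lorentz u v < 0"
  shows "snd (snd u) > 0"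
proof (rule ccontr)
  txt \<open>Reverse Cauchy-Schwarz: timelike vectors in opposite time cones have positive product.\<close>
  obtain a b t where u: "u = (a, b, t)" by (cases u) auto
  obtain a' b' t' where v': "v = (a', b', t')" by (cases v) auto
  assume "\<not> snd (snd u) > 0"
  then have "t \<le> 0" by (simp add: u)
  have sp: "a^2 + b^2 < t^2" using timelike by (simp add: u power2_eq_square)
  have sp': "a'^2 + b'^2 < t'^2" and "t' > 0" using v by (auto simp: v' hyperboloid_def power2_eq_square)
  have "(a * a' + b * b')^2 \<le> (a^2 + b^2) * (a'^2 + b'^2)"
    using zero_le_power2[of "a * b' - b * a'"] by (simp add: power2_eq_square algebra_simps)
  also have "\<dots> < t^2 * t'^2"
    using sp sp' by (intro mult_strict_mono') auto
  also have "\<dots> = (t * t')^2" by (simp add: power_mult_distrib)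
  finally have "(- (a * a' + b * b'))^2 < (- (t * t'))^2" by (simp only: power2_minus)
  then have "- (a * a' + b * b') < - (t * t')"
    by (rule power2_less_imp_less) (use \<open>t \<le> 0\<close> \<open>t' > 0\<close> in \<open>simp add: mult_nonpos_nonneg\<close>)
  then show False using neg by (simp add: u v')
qed

section \<open>The Gram determinant and the triangle inequalities\<close>

definition gram :: "real \<Rightarrow> real \<Rightarrow> real \<Rightarrow> real" where
  "gram x y z = 1 + 2 * x * y * z - x^2 - y^2 - z^2"

text \<open>For the Gram matrix G = [[1, z, y], [z, 1, x], [y, x, 1]] of a triangle with
  cosh-lengths x, y, z we have det G = gram x y z, and Xi_form p q r x y z is w adj(G) w^T
  for w = (p, q, r).\<close>

definition Xi_form :: "real \<Rightarrow> real \<Rightarrow> real \<Rightarrow> real \<Rightarrow> real \<Rightarrow> real \<Rightarrow> real" where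
  "Xi_form p q r x y z = p^2 * (1 - x^2) + q^2 * (1 - y^2) + r^2 * (1 - z^2)
     + 2 * p * q * (x * y - z) + 2 * p * r * (x * z - y) + 2 * q * r * (y * z - x)"

definition cosh_edge :: "real \<Rightarrow> real \<Rightarrow> real \<Rightarrow> real" where
  "cosh_edge ri rj I = cosh ri * cosh rj + I * sinh ri * sinh rj"

lemma Xi_eq_Xi_form:
  "Xi ri rj rk a b c = Xi_form (cosh ri) (cosh rj) (cosh rk)
     (cosh_edge rj rk a) (cosh_edge rk ri b) (cosh_edge ri rj c)"
  by (simp add: Xi_def Xi_form_def cosh_edge_def Let_def)

lemma Xi_less_gram:
  assumes "ri > 0" "rj > 0" "rk > 0" "a > 1" "b > 1" "c > 1"
  shows "Xi ri rj rk a b c < gram (cosh_edge rj rk a) (cosh_edge rk ri b) (cosh_edge ri rj c)"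
proof -
  have "gram (cosh_edge rj rk a) (cosh_edge rk ri b) (cosh_edge ri rj c) - Xi ri rj rk a b c
      = (sinh ri * sinh rj * sinh rk)^2 * (a^2 + b^2 + c^2 + 2 * a * b * c - 1)"
    using cosh_square_eq[of ri] cosh_square_eq[of rj] cosh_square_eq[of rk]
    unfolding Xi_eq_Xi_form gram_def Xi_form_def cosh_edge_def by algebra
  moreover have "a^2 + b^2 + c^2 + 2 * a * b * c - 1 > 0"
  proof -
    have "1 < a^2" "0 < b^2" "0 < c^2" "0 < 2 * a * b * c"
      using assms(4-6) by (simp_all add: one_less_power)
    then show ?thesis by linarith
  qed
  moreover have "(sinh ri * sinh rj * sinh rk)^2 > 0"
    using assms(1-3) by simp
  ultimately show ?thesis
    by (metis diff_gt_0_iff_gt mult_pos_pos)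
qed

lemma one_less_cosh_edge:
  assumes "r1 > 0" "r2 > 0" "I > 1"
  shows "1 < cosh_edge r1 r2 I"
proof -
  have "1 \<le> cosh r1 * cosh r2"
    using mult_mono[OF cosh_real_ge_1 cosh_real_ge_1, of r1 r2] by simp
  moreover have "0 < I * sinh r1 * sinh r2" using assms by simp
  ultimately show ?thesis by (simp add: cosh_edge_def)
qed

lemma cosh_inv_len:
  assumes "r1 > 0" "r2 > 0" "I > 1"
  shows "cosh (inv_len r1 r2 I) = cosh_edge r1 r2 I"
  using one_less_cosh_edge[OF assms] by (simp add: inv_len_def flip: cosh_edge_def)

lemma arcosh_less_add_arcosh:
  fixes x y z :: real
  assumes "x \<ge> 1" "y \<ge> 1" "z \<ge> 1" "gram x y z > 0"
  shows "arcosh z < arcosh x + arcosh y"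
proof -
  have "(z - x * y)^2 < (x^2 - 1) * (y^2 - 1)"
    using assms(4) unfolding gram_def by (simp add: power2_eq_square algebra_simps)
  then have "z - x * y < sqrt ((x^2 - 1) * (y^2 - 1))"
    by (rule real_less_rsqrt)
  then have "z < cosh (arcosh x + arcosh y)"
    using assms by (simp add: cosh_add sinh_arcosh_real real_sqrt_mult)
  then have "arcosh z < arcosh (cosh (arcosh x + arcosh y))"
    using assms by (subst arcosh_less_iff_real) auto
  also have "\<dots> = arcosh x + arcosh y" using assms by (simp add: arcosh_cosh_real)
  finally show ?thesis .
qed

lemma strict_tri_arcosh:
  fixes x y z :: real
  assumes "x \<ge> 1" "y \<ge> 1" "z \<ge> 1" "gram x y z > 0"
  shows "strict_tri (arcosh z) (arcosh x) (arcosh y)"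
proof -
  have "gram y z x > 0" "gram z x y > 0"
    using assms(4) unfolding gram_def by (simp_all add: algebra_simps)
  then show ?thesis
    using arcosh_less_add_arcosh[of x y z] arcosh_less_add_arcosh[of y z x]
      arcosh_less_add_arcosh[of z x y] assms
    unfolding strict_tri_def by (simp add: add.commute)
qed

lemma face_strict_tri:
  assumes "ri > 0" "rj > 0" "rk > 0" "a > 1" "b > 1" "c > 1" "Xi ri rj rk a b c > 0"
  shows "strict_tri (inv_len ri rj c) (inv_len rj rk a) (inv_len rk ri b)"
proof -
  have "cosh_edge rj rk a \<ge> 1" "cosh_edge rk ri b \<ge> 1" "cosh_edge ri rj c \<ge> 1"
    using assms one_less_cosh_edge by (simp_all add: less_imp_le)
  moreover have "gram (cosh_edge rj rk a) (cosh_edge rk ri b) (cosh_edge ri rj c) > 0"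
    using Xi_less_gram assms by (meson less_trans)
  ultimately show ?thesis
    unfolding inv_len_def cosh_edge_def[symmetric] by (rule strict_tri_arcosh)
qed

section \<open>The hyperboloid model of the disk\<close>

text \<open>The standard isometry of the Poincare disk onto the upper sheet of the hyperboloid.\<close>

definition hyp_lift :: "complex \<Rightarrow> real \<times> real \<times> real" where
  "hyp_lift z = (2 * Re z / (1 - (cmod z)^2), 2 * Im z / (1 - (cmod z)^2),
                 (1 + (cmod z)^2) / (1 - (cmod z)^2))"

lemma pdisk_iff: "z \<in> pdisk \<longleftrightarrow> (Re z)^2 + (Im z)^2 < 1"
  by (simp add: pdisk_def cmod_def)

lemma hyp_lift_eq:
  "hyp_lift z = (2 * Re z / (1 - (Re z)^2 - (Im z)^2), 2 * Im z / (1 - (Re z)^2 - (Im z)^2),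
                 (1 + (Re z)^2 + (Im z)^2) / (1 - (Re z)^2 - (Im z)^2))"
  by (simp add: hyp_lift_def cmod_power2 diff_diff_eq add.assoc)

lemma hyp_lift_in_hyperboloid:
  assumes "z \<in> pdisk"
  shows "hyp_lift z \<in> hyperboloid"
proof -
  define a b n where "a = Re z" and "b = Im z" and "n = 1 - (Re z)^2 - (Im z)^2"
  have "n > 0" using assms by (simp add: n_def pdisk_iff)
  have lift: "hyp_lift z = (2 * a / n, 2 * b / n, (1 + a^2 + b^2) / n)"
    unfolding hyp_lift_eq a_def b_def n_def by (rule refl)
  have "lorentz (hyp_lift z) (hyp_lift z) = ((2 * a)^2 + (2 * b)^2 - (1 + a^2 + b^2)^2) / n^2"
    using \<open>n > 0\<close> by (simp add: lift field_simps power2_eq_square)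
  also have "(2 * a)^2 + (2 * b)^2 - (1 + a^2 + b^2)^2 = - (n^2)"
    unfolding n_def a_def b_def by algebra
  finally show ?thesis
    using \<open>n > 0\<close> by (simp add: hyperboloid_def lift add_pos_nonneg)
qed

lemma lorentz_hyp_lift:
  assumes "z \<in> pdisk" "w \<in> pdisk"
  shows "lorentz (hyp_lift z) (hyp_lift w) = - cosh (hdist z w)"
proof -
  define n m where "n = 1 - (Re z)^2 - (Im z)^2" and "m = 1 - (Re w)^2 - (Im w)^2"
  have "n > 0" "m > 0" using assms by (simp_all add: n_def m_def pdisk_iff)
  define d where "d = (Re z - Re w)^2 + (Im z - Im w)^2"
  have "hyp_lift z = (2 * Re z / n, 2 * Im z / n, (1 + (Re z)^2 + (Im z)^2) / n)"
       "hyp_lift w = (2 * Re w / m, 2 * Im w / m, (1 + (Re w)^2 + (Im w)^2) / m)"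
    unfolding hyp_lift_eq n_def m_def by (rule refl)+
  then have "lorentz (hyp_lift z) (hyp_lift w)
      = (2 * Re z * (2 * Re w) + 2 * Im z * (2 * Im w)
         - (1 + (Re z)^2 + (Im z)^2) * (1 + (Re w)^2 + (Im w)^2)) / (n * m)"
    using \<open>n > 0\<close> \<open>m > 0\<close> by (simp add: field_simps)
  also have "\<dots> = - (n * m + 2 * d) / (n * m)"
    unfolding n_def m_def d_def by algebra
  also have "\<dots> = - (1 + 2 * d / (n * m))"
    using \<open>n > 0\<close> \<open>m > 0\<close> by (simp add: field_simps)
  also have "1 + 2 * d / (n * m) = cosh (hdist z w)"
  proof -
    have "(cmod (z - w))^2 = d" "1 - (cmod z)^2 = n" "1 - (cmod w)^2 = m"
      by (simp_all add: cmod_power2 d_def n_def m_def)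
    then show ?thesis
      using \<open>n > 0\<close> \<open>m > 0\<close> by (simp add: hdist_def d_def)
  qed
  finally show ?thesis .
qed

lemma hdist_nonneg:
  assumes "z \<in> pdisk" "w \<in> pdisk"
  shows "hdist z w \<ge> 0"
proof -
  have "(cmod z)^2 < 1" "(cmod w)^2 < 1"
    using assms by (simp_all add: pdisk_def abs_square_less_1)
  then show ?thesis
    unfolding hdist_def by (intro arcosh_nonneg_real) simp
qed

section \<open>Euclidean circles as Minkowski vectors\<close>

text \<open>circle_vec c R encodes the equation |w|^2 - 2 w \<bullet> c + |c|^2 - R^2 = 0 of sphere c R in
  such a way that incidence and orthogonality become Lorentz-bilinear conditions.\<close>

definition circle_vec :: "complex \<Rightarrow> real \<Rightarrow> real \<times> real \<times> real" where
  "circle_vec c R = (2 * Re c, 2 * Im c, (cmod c)^2 - R^2 + 1)"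

lemma circle_vec_inj:
  assumes "circle_vec c R = circle_vec c' R'" "R \<ge> 0" "R' \<ge> 0"
  shows "c = c' \<and> R = R'"
proof -
  have "c = c'" using assms(1) by (simp add: circle_vec_def complex_eq_iff)
  moreover from this have "R^2 = R'^2" using assms(1) by (simp add: circle_vec_def)
  ultimately show ?thesis using assms(2,3) by (simp add: power2_eq_iff_nonneg)
qed

lemma orth_circ_iff_lorentz:
  "orth_circ c R c' R' \<longleftrightarrow>
     lorentz (circle_vec c R) (circle_vec c' R') = - (((cmod c)^2 - R^2 - 1) * ((cmod c')^2 - R'^2 - 1))"
proof -
  have "lorentz (circle_vec c R) (circle_vec c' R')
      = - (((cmod c)^2 - R^2 - 1) * ((cmod c')^2 - R'^2 - 1)) + 2 * (R^2 + R'^2 - (cmod (c - c'))^2)"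
    by (simp add: circle_vec_def cmod_power2) algebra
  then show ?thesis unfolding orth_circ_def by auto
qed

lemma on_circle_iff_lorentz:
  assumes "w \<in> pdisk"
  shows "(cmod (w - c))^2 = R^2 \<longleftrightarrow> lorentz (circle_vec c R) (hyp_lift w) = (cmod c)^2 - R^2 - 1"
proof -
  define n where "n = 1 - (Re w)^2 - (Im w)^2"
  have "n > 0" using assms by (simp add: n_def pdisk_iff)
  have "hyp_lift w = (2 * Re w / n, 2 * Im w / n, (1 + (Re w)^2 + (Im w)^2) / n)"
    unfolding hyp_lift_eq n_def by (rule refl)
  then have "n * (lorentz (circle_vec c R) (hyp_lift w) - ((cmod c)^2 - R^2 - 1))
      = 4 * (Re c * Re w + Im c * Im w) - ((cmod c)^2 - R^2 + 1) * (1 + (Re w)^2 + (Im w)^2)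
        - n * ((cmod c)^2 - R^2 - 1)"
    using \<open>n > 0\<close> by (simp add: circle_vec_def field_simps)
  also have "\<dots> = - 2 * ((cmod (w - c))^2 - R^2)"
    by (simp add: n_def cmod_power2) algebra
  finally show ?thesis using \<open>n > 0\<close> by auto
qed

definition euclid_center :: "real \<times> real \<times> real \<Rightarrow> real \<Rightarrow> complex" where
  "euclid_center u \<rho> = Complex (fst u / (snd (snd u) + cosh \<rho>)) (fst (snd u) / (snd (snd u) + cosh \<rho>))"

definition euclid_radius :: "real \<times> real \<times> real \<Rightarrow> real \<Rightarrow> real" where
  "euclid_radius u \<rho> = sinh \<rho> / (snd (snd u) + cosh \<rho>)"

lemma euclid_denominator_pos: "u \<in> hyperboloid \<Longrightarrow> snd (snd u) + cosh \<rho> > 0"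
  by (simp add: hyperboloid_def add_pos_pos)

lemma euclid_radius_nonneg: "u \<in> hyperboloid \<Longrightarrow> \<rho> \<ge> 0 \<Longrightarrow> euclid_radius u \<rho> \<ge> 0"
  by (simp add: euclid_radius_def euclid_denominator_pos divide_nonneg_pos)

lemma euclid_radius_pos: "u \<in> hyperboloid \<Longrightarrow> \<rho> > 0 \<Longrightarrow> euclid_radius u \<rho> > 0"
  by (simp add: euclid_radius_def euclid_denominator_pos)

lemma circle_vec_euclid:
  assumes "u \<in> hyperboloid"
  shows "circle_vec (euclid_center u \<rho>) (euclid_radius u \<rho>) = (2 / (snd (snd u) + cosh \<rho>)) *\<^sub>R u"
proof -
  obtain a b t where u: "u = (a, b, t)" by (cases u) auto
  have ab: "a^2 + b^2 = t^2 - 1" and "t > 0" using assms by (simp_all add: u hyperboloid_Pair)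
  define A where "A = t + cosh \<rho>"
  have "A > 0" using \<open>t > 0\<close> by (simp add: A_def add_pos_pos)
  have "(a^2 + b^2 - (sinh \<rho>)^2) / A^2 + 1 = 2 / A * t"
  proof -
    have "(t - cosh \<rho>) * A = t^2 - (cosh \<rho>)^2"
      by (simp add: A_def power2_eq_square algebra_simps)
    then have "a^2 + b^2 - (sinh \<rho>)^2 = (t - cosh \<rho>) * A"
      using ab cosh_square_eq[of \<rho>] by linarith
    then have "(a^2 + b^2 - (sinh \<rho>)^2) / A^2 + 1 = (t - cosh \<rho>) * A / A^2 + 1"
      by (simp only:)
    also have "\<dots> = (t - cosh \<rho> + A) / A"
      using \<open>A > 0\<close> by (simp add: power2_eq_square field_simps)
    also have "\<dots> = 2 / A * t" by (simp add: A_def)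
    finally show ?thesis .
  qed
  then show ?thesis
    by (simp add: u circle_vec_def euclid_center_def euclid_radius_def cmod_power2
        power_divide add_divide_distrib diff_divide_distrib flip: A_def)
qed

lemma circle_power_euclid:
  assumes "u \<in> hyperboloid"
  shows "(cmod (euclid_center u \<rho>))^2 - (euclid_radius u \<rho>)^2 - 1
         = - (2 / (snd (snd u) + cosh \<rho>)) * cosh \<rho>"
proof -
  define A where "A = snd (snd u) + cosh \<rho>"
  have "A > 0" using euclid_denominator_pos[OF assms] by (simp add: A_def)
  have "(cmod (euclid_center u \<rho>))^2 - (euclid_radius u \<rho>)^2 + 1 = 2 / A * snd (snd u)"
    using arg_cong[OF circle_vec_euclid[OF assms], of "\<lambda>v. snd (snd v)"]
    by (simp add: circle_vec_def A_def)
  then show ?thesis using \<open>A > 0\<close> by (simp add: A_def field_simps)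
qed

lemma orth_circ_euclid_iff:
  assumes "v \<in> hyperboloid"
  shows "orth_circ c R (euclid_center v \<sigma>) (euclid_radius v \<sigma>) \<longleftrightarrow>
         lorentz (circle_vec c R) v = ((cmod c)^2 - R^2 - 1) * cosh \<sigma>"
proof -
  define A where "A = snd (snd v) + cosh \<sigma>"
  have "A > 0" using euclid_denominator_pos[OF assms] by (simp add: A_def)
  have "orth_circ c R (euclid_center v \<sigma>) (euclid_radius v \<sigma>) \<longleftrightarrow>
        2 / A * lorentz (circle_vec c R) v = 2 / A * (((cmod c)^2 - R^2 - 1) * cosh \<sigma>)"
    by (simp add: orth_circ_iff_lorentz circle_vec_euclid[OF assms] circle_power_euclid[OF assms]
        lorentz_scaleR_right flip: A_def)
  then show ?thesis using \<open>A > 0\<close> by simp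
qed

lemma orth_circ_euclid_euclid_iff:
  assumes "u \<in> hyperboloid" "v \<in> hyperboloid"
  shows "orth_circ (euclid_center u \<rho>) (euclid_radius u \<rho>) (euclid_center v \<sigma>) (euclid_radius v \<sigma>)
         \<longleftrightarrow> lorentz u v = - cosh \<rho> * cosh \<sigma>"
proof -
  define A where "A = snd (snd u) + cosh \<rho>"
  have "A > 0" using euclid_denominator_pos[OF assms(1)] by (simp add: A_def)
  have "orth_circ (euclid_center u \<rho>) (euclid_radius u \<rho>) (euclid_center v \<sigma>) (euclid_radius v \<sigma>)
        \<longleftrightarrow> 2 / A * lorentz u v = 2 / A * (- cosh \<rho> * cosh \<sigma>)"
    by (simp add: orth_circ_euclid_iff[OF assms(2)] circle_vec_euclid[OF assms(1)]
        circle_power_euclid[OF assms(1)] lorentz_scaleR_left mult.assoc flip: A_def)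
  then show ?thesis using \<open>A > 0\<close> by (auto simp: field_simps)
qed

lemma euclid_circle_subset_pdisk:
  assumes "u \<in> hyperboloid"
  shows "sphere (euclid_center u \<rho>) (euclid_radius u \<rho>) \<subseteq> pdisk"
proof
  obtain a b t where u: "u = (a, b, t)" by (cases u) auto
  have ab: "a^2 + b^2 = t^2 - 1" and "t > 0" using assms by (simp_all add: u hyperboloid_Pair)
  define A where "A = t + cosh \<rho>"
  have "A > 0" using euclid_denominator_pos[OF assms] by (simp add: A_def u)
  have "(cmod (euclid_center u \<rho>))^2 = (a^2 + b^2) / A^2"
    by (simp add: u euclid_center_def cmod_power2 power_divide add_divide_distrib flip: A_def)
  also have "\<dots> < (t / A)^2"
    using ab \<open>A > 0\<close> by (simp add: power_divide divide_strict_right_mono)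
  finally have center: "cmod (euclid_center u \<rho>) < t / A"
    by (rule power2_less_imp_less) (use \<open>t > 0\<close> \<open>A > 0\<close> in simp)
  have radius: "euclid_radius u \<rho> < cosh \<rho> / A"
    using \<open>A > 0\<close> sinh_less_cosh_real[of \<rho>]
    by (simp add: u euclid_radius_def divide_strict_right_mono flip: A_def)
  fix w assume "w \<in> sphere (euclid_center u \<rho>) (euclid_radius u \<rho>)"
  then have "cmod w \<le> cmod (euclid_center u \<rho>) + euclid_radius u \<rho>"
    using norm_triangle_sub[of w "euclid_center u \<rho>"] by (simp add: dist_norm norm_minus_commute)
  also have "\<dots> < t / A + cosh \<rho> / A" using center radius by linarith
  also have "\<dots> = 1" using \<open>A > 0\<close> by (simp add: A_def add_divide_distrib[symmetric])
  finally show "w \<in> pdisk" by (simp add: pdisk_def)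
qed

lemma hcircle_eq_sphere:
  assumes z: "z \<in> pdisk" and "\<rho> \<ge> 0"
  shows "hcircle z \<rho> = sphere (euclid_center (hyp_lift z) \<rho>) (euclid_radius (hyp_lift z) \<rho>)"
proof -
  define u c R where "u = hyp_lift z" and "c = euclid_center u \<rho>" and "R = euclid_radius u \<rho>"
  define A where "A = snd (snd u) + cosh \<rho>"
  have u: "u \<in> hyperboloid" using hyp_lift_in_hyperboloid[OF z] by (simp add: u_def)
  have "A > 0" using euclid_denominator_pos[OF u] by (simp add: A_def)
  have "R \<ge> 0" using \<open>A > 0\<close> \<open>\<rho> \<ge> 0\<close> by (simp add: R_def euclid_radius_def flip: A_def)
  have "w \<in> sphere c R \<longleftrightarrow> hdist z w = \<rho>" if w: "w \<in> pdisk" for w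
  proof -
    have "w \<in> sphere c R \<longleftrightarrow> (cmod (w - c))^2 = R^2"
      using \<open>R \<ge> 0\<close> by (simp add: dist_norm norm_minus_commute power2_eq_iff_nonneg)
    also have "\<dots> \<longleftrightarrow> 2 / A * lorentz u (hyp_lift w) = 2 / A * (- cosh \<rho>)"
      by (simp add: on_circle_iff_lorentz[OF w] c_def R_def circle_vec_euclid[OF u]
          circle_power_euclid[OF u] lorentz_scaleR_left flip: A_def)
    also have "\<dots> \<longleftrightarrow> cosh (hdist z w) = cosh \<rho>"
      using \<open>A > 0\<close> by (simp add: u_def lorentz_hyp_lift[OF z w])
    also have "\<dots> \<longleftrightarrow> hdist z w = \<rho>"
      using hdist_nonneg[OF z w] \<open>\<rho> \<ge> 0\<close> by simp
    finally show ?thesis .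
  qed
  moreover have "sphere c R \<subseteq> pdisk"
    unfolding c_def R_def by (rule euclid_circle_subset_pdisk[OF u])
  ultimately show ?thesis
    unfolding hcircle_def by (auto simp flip: u_def c_def R_def)
qed

lemma sphere_eq_sphereD:
  fixes a a' :: complex
  assumes "s > 0" "s' > 0" "sphere a s = sphere a' s'"
  shows "a = a' \<and> s = s'"
proof -
  have parallelogram: "(cmod (d + of_real t))^2 + (cmod (d - of_real t))^2 = 2 * (cmod d)^2 + 2 * t^2"
    for d :: complex and t :: real
    unfolding cmod_power2 by (simp add: power2_eq_square algebra_simps)
  have pythagoras: "(cmod (b - a))^2 + r^2 = R^2"
    if "r > 0" "sphere a R = sphere b r" for a b :: complex and R r :: real
  proof -
    have "b + of_real r \<in> sphere a R" "b - of_real r \<in> sphere a R"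
      using that by (simp_all add: dist_norm)
    then have "cmod (b - a + of_real r) = R" "cmod (b - a - of_real r) = R"
      by (simp_all add: dist_norm norm_minus_commute algebra_simps)
    then show ?thesis using parallelogram[of "b - a" r] by simp
  qed
  have "(cmod (a - a'))^2 + s'^2 = s^2" "(cmod (a - a'))^2 + s^2 = s'^2"
    using pythagoras[of s' a s a'] pythagoras[of s a' s' a] assms
    by (simp_all add: norm_minus_commute)
  then have "(cmod (a - a'))^2 = 0" "s^2 = s'^2" by linarith+
  then show ?thesis using assms by (simp add: power2_eq_iff_nonneg)
qed

lemma all_sphere_eq_hcircle_iff:
  assumes "z \<in> pdisk" "r > 0"
  shows "(\<forall>a s. s > 0 \<and> sphere a s = hcircle z r \<longrightarrow> P a s) \<longleftrightarrow>
         P (euclid_center (hyp_lift z) r) (euclid_radius (hyp_lift z) r)"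
  using hcircle_eq_sphere[OF assms(1)] assms(2) sphere_eq_sphereD
    euclid_radius_pos[OF hyp_lift_in_hyperboloid[OF assms(1)] assms(2)]
  by (metis less_imp_le)

section \<open>The orthogonal circle of a face\<close>

definition det3 :: "real \<times> real \<times> real \<Rightarrow> real \<times> real \<times> real \<Rightarrow> real \<times> real \<times> real \<Rightarrow> real" where
  "det3 u v w =
     fst u * (fst (snd v) * snd (snd w) - snd (snd v) * fst (snd w))
   - fst (snd u) * (fst v * snd (snd w) - snd (snd v) * fst w)
   + snd (snd u) * (fst v * fst (snd w) - fst (snd v) * fst w)"

lemma det3_square_eq_gram:
  assumes "lorentz v1 v1 = -1" "lorentz v2 v2 = -1" "lorentz v3 v3 = -1"
    and "lorentz v2 v3 = -x" "lorentz v3 v1 = -y" "lorentz v1 v2 = -z"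
  shows "(det3 v1 v2 v3)^2 = gram x y z"
proof -
  obtain a1 b1 t1 a2 b2 t2 a3 b3 t3 where v: "v1 = (a1, b1, t1)" "v2 = (a2, b2, t2)" "v3 = (a3, b3, t3)"
    by (metis prod_cases3)
  txt \<open>With M the matrix of rows v_i and J = diag(1, 1, -1), the Lorentz Gram matrix
    M J M^T is -G, whose determinant -gram x y z also equals det J (det M)^2.\<close>
  show ?thesis
    using assms unfolding v det3_def gram_def by simp algebra
qed

lemma lorentz_eq_0_if_det3_nonzero:
  assumes "det3 v1 v2 v3 \<noteq> 0" "lorentz w v1 = 0" "lorentz w v2 = 0" "lorentz w v3 = 0"
  shows "w = 0"
proof -
  obtain a1 b1 t1 a2 b2 t2 a3 b3 t3 where v: "v1 = (a1, b1, t1)" "v2 = (a2, b2, t2)" "v3 = (a3, b3, t3)"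
    by (metis prod_cases3)
  obtain a b t where w: "w = (a, b, t)" by (cases w) auto
  have "det3 v1 v2 v3 * a = 0" "det3 v1 v2 v3 * b = 0" "det3 v1 v2 v3 * t = 0"
    using assms(2-4) unfolding v w det3_def by simp_all algebra+
  then show ?thesis using assms(1) by (simp add: w zero_prod_def)
qed

lemma lorentz_dual_combination:
  assumes "lorentz v1 v1 = -1" "lorentz v2 v2 = -1" "lorentz v3 v3 = -1"
    and "lorentz v2 v3 = -x" "lorentz v3 v1 = -y" "lorentz v1 v2 = -z"
  obtains Y where "lorentz Y v1 = - gram x y z * p" "lorentz Y v2 = - gram x y z * q"
    "lorentz Y v3 = - gram x y z * r" "lorentz Y Y = - gram x y z * Xi_form p q r x y z"
proof -
  txt \<open>(b1, b2, b3) = adj(G) (p, q, r), so G (b1, b2, b3) = det G (p, q, r).\<close>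
  define b1 b2 b3 where
    "b1 = p * (1 - x^2) + q * (x * y - z) + r * (x * z - y)" and
    "b2 = p * (x * y - z) + q * (1 - y^2) + r * (y * z - x)" and
    "b3 = p * (x * z - y) + q * (y * z - x) + r * (1 - z^2)"
  define Y where "Y = b1 *\<^sub>R v1 + b2 *\<^sub>R v2 + b3 *\<^sub>R v3"
  have expand: "lorentz Y v = b1 * lorentz v1 v + b2 * lorentz v2 v + b3 * lorentz v3 v" for v
    by (simp add: Y_def lorentz_add_left lorentz_scaleR_left)
  have sym: "lorentz v3 v2 = -x" "lorentz v1 v3 = -y" "lorentz v2 v1 = -z"
    using assms(4-6) by (simp_all add: lorentz_commute)
  have Y1: "lorentz Y v1 = - gram x y z * p"
    unfolding expand assms sym b1_def b2_def b3_def gram_def by algebra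
  moreover have Y2: "lorentz Y v2 = - gram x y z * q"
    unfolding expand assms sym b1_def b2_def b3_def gram_def by algebra
  moreover have Y3: "lorentz Y v3 = - gram x y z * r"
    unfolding expand assms sym b1_def b2_def b3_def gram_def by algebra
  moreover have "lorentz Y Y = - gram x y z * Xi_form p q r x y z"
  proof -
    have "lorentz Y Y = b1 * lorentz v1 Y + b2 * lorentz v2 Y + b3 * lorentz v3 Y"
      by (rule expand)
    also have "\<dots> = b1 * lorentz Y v1 + b2 * lorentz Y v2 + b3 * lorentz Y v3"
      by (simp only: lorentz_commute[of _ Y])
    also have "\<dots> = - gram x y z * Xi_form p q r x y z"
      unfolding Y1 Y2 Y3 b1_def b2_def b3_def Xi_form_def by algebra
    finally show ?thesis .
  qed
  ultimately show ?thesis using that by blast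
qed

lemma exists_orthogonal_hcircle:
  assumes v: "v1 \<in> hyperboloid" "v2 \<in> hyperboloid" "v3 \<in> hyperboloid"
    and edges: "lorentz v2 v3 = -x" "lorentz v3 v1 = -y" "lorentz v1 v2 = -z"
    and "p > 0" "Xi_form p q r x y z > 0" "Xi_form p q r x y z < gram x y z"
  obtains u \<rho> where "u \<in> hyperboloid" "\<rho> > 0"
    "lorentz u v1 = - cosh \<rho> * p" "lorentz u v2 = - cosh \<rho> * q" "lorentz u v3 = - cosh \<rho> * r"
proof -
  define D X where "D = gram x y z" and "X = Xi_form p q r x y z"
  have "X > 0" "D > X" using assms(8,9) by (simp_all add: D_def X_def)
  have unit: "lorentz v1 v1 = -1" "lorentz v2 v2 = -1" "lorentz v3 v3 = -1"
    using v by (simp_all add: hyperboloid_def)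
  obtain Y where Y: "lorentz Y v1 = - D * p" "lorentz Y v2 = - D * q" "lorentz Y v3 = - D * r"
    and YY: "lorentz Y Y = - D * X"
    using lorentz_dual_combination[OF unit edges] unfolding D_def X_def by blast
  have "snd (snd Y) > 0"
    using \<open>X > 0\<close> \<open>D > X\<close> \<open>p > 0\<close>
    by (intro time_pos_if_lorentz_neg[OF _ v(1)]) (simp_all add: YY Y)
  define s where "s = sqrt (D * X)"
  have "s > 0" and s2: "s^2 = D * X" using \<open>X > 0\<close> \<open>D > X\<close> by (simp_all add: s_def)
  define u where "u = (1 / s) *\<^sub>R Y"
  have "lorentz u u = - (D * X) / s^2"
    by (simp add: u_def lorentz_scaleR_left lorentz_scaleR_right YY power2_eq_square)
  then have "u \<in> hyperboloid"
    using \<open>s > 0\<close> \<open>snd (snd Y) > 0\<close> \<open>X > 0\<close> \<open>D > X\<close> by (simp add: hyperboloid_def s2 u_def)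
  define \<rho> where "\<rho> = arcosh (sqrt (D / X))"
  have "sqrt (D / X) > 1" using \<open>X > 0\<close> \<open>D > X\<close> by simp
  then have cosh_\<rho>: "cosh \<rho> = sqrt (D / X)"
    by (simp add: \<rho>_def)
  have "\<rho> \<ge> 0" using \<open>sqrt (D / X) > 1\<close> by (simp add: \<rho>_def)
  moreover have "\<rho> \<noteq> 0" using cosh_\<rho> \<open>sqrt (D / X) > 1\<close> by auto
  ultimately have "\<rho> > 0" by simp
  have "cosh \<rho> * s = D"
    using \<open>X > 0\<close> \<open>D > X\<close> by (simp add: cosh_\<rho> s_def flip: real_sqrt_mult)
  then have "lorentz u v = - cosh \<rho> * w" if "lorentz Y v = - D * w" for v w
    using that \<open>s > 0\<close> by (simp add: u_def lorentz_scaleR_left field_simps)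
  with Y have "lorentz u v1 = - cosh \<rho> * p" "lorentz u v2 = - cosh \<rho> * q" "lorentz u v3 = - cosh \<rho> * r"
    by blast+
  with \<open>u \<in> hyperboloid\<close> \<open>\<rho> > 0\<close> show ?thesis using that by blast
qed

lemma orthogonal_circle_unique:
  assumes u: "u \<in> hyperboloid" and v: "v1 \<in> hyperboloid" "v2 \<in> hyperboloid" "v3 \<in> hyperboloid"
    and "det3 v1 v2 v3 \<noteq> 0" "\<rho> \<ge> 0" "R \<ge> 0"
    and uv: "lorentz u v1 = - cosh \<rho> * cosh \<sigma>1" "lorentz u v2 = - cosh \<rho> * cosh \<sigma>2"
      "lorentz u v3 = - cosh \<rho> * cosh \<sigma>3"
    and orth: "orth_circ c R (euclid_center v1 \<sigma>1) (euclid_radius v1 \<sigma>1)"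
      "orth_circ c R (euclid_center v2 \<sigma>2) (euclid_radius v2 \<sigma>2)"
      "orth_circ c R (euclid_center v3 \<sigma>3) (euclid_radius v3 \<sigma>3)"
  shows "c = euclid_center u \<rho> \<and> R = euclid_radius u \<rho>"
proof -
  define k where "k = (cmod c)^2 - R^2 - 1"
  define scale where "scale = - k / cosh \<rho>"
  have "circle_vec c R - scale *\<^sub>R u = 0"
  proof (rule lorentz_eq_0_if_det3_nonzero[OF \<open>det3 v1 v2 v3 \<noteq> 0\<close>])
    have "lorentz (circle_vec c R - scale *\<^sub>R u) v = 0"
      if "v \<in> hyperboloid" "orth_circ c R (euclid_center v \<sigma>) (euclid_radius v \<sigma>)"
         "lorentz u v = - cosh \<rho> * cosh \<sigma>" for v \<sigma>
    proof -
      have "lorentz (circle_vec c R) v = k * cosh \<sigma>"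
        using that(2) by (simp add: orth_circ_euclid_iff[OF that(1)] k_def)
      then show ?thesis
        by (simp add: lorentz_add_left lorentz_diff_left lorentz_scaleR_left that(3) scale_def)
    qed
    with v orth uv show "lorentz (circle_vec c R - scale *\<^sub>R u) v1 = 0"
      "lorentz (circle_vec c R - scale *\<^sub>R u) v2 = 0" "lorentz (circle_vec c R - scale *\<^sub>R u) v3 = 0"
      by blast+
  qed
  then have N: "circle_vec c R = scale *\<^sub>R u" by simp
  have "scale = 2 / (snd (snd u) + cosh \<rho>)"
  proof -
    have "k + 2 = scale * snd (snd u)"
      using arg_cong[OF N, of "\<lambda>v. snd (snd v)"] by (simp add: circle_vec_def k_def)
    moreover have "k = - scale * cosh \<rho>" by (simp add: scale_def)
    ultimately have "scale * (snd (snd u) + cosh \<rho>) = 2" by (simp add: algebra_simps)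
    then show ?thesis using euclid_denominator_pos[OF u, of \<rho>] by (simp add: eq_divide_eq)
  qed
  then have "circle_vec c R = circle_vec (euclid_center u \<rho>) (euclid_radius u \<rho>)"
    by (simp add: N circle_vec_euclid[OF u])
  then show ?thesis
    using circle_vec_inj \<open>R \<ge> 0\<close> euclid_radius_nonneg[OF u \<open>\<rho> \<ge> 0\<close>] by blast
qed

lemma is_orthogonal_circle_iff:
  assumes "zi \<in> pdisk" "zj \<in> pdisk" "zk \<in> pdisk" "ri > 0" "rj > 0" "rk > 0"
  shows "is_orthogonal_circle zi zj zk ri rj rk c R \<longleftrightarrow> R > 0 \<and>
    orth_circ c R (euclid_center (hyp_lift zi) ri) (euclid_radius (hyp_lift zi) ri) \<and>
    orth_circ c R (euclid_center (hyp_lift zj) rj) (euclid_radius (hyp_lift zj) rj) \<and>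
    orth_circ c R (euclid_center (hyp_lift zk) rk) (euclid_radius (hyp_lift zk) rk)"
  unfolding is_orthogonal_circle_def
  by (simp add: all_sphere_eq_hcircle_iff[where P = "orth_circ c R"] assms)

lemma face_orthogonal_circle:
  assumes r: "ri > 0" "rj > 0" "rk > 0" and I: "a > 1" "b > 1" "c > 1"
    and Xi: "Xi ri rj rk a b c > 0"
    and z: "zi \<in> pdisk" "zj \<in> pdisk" "zk \<in> pdisk"
    and len: "hdist zi zj = inv_len ri rj c" "hdist zj zk = inv_len rj rk a"
      "hdist zk zi = inv_len rk ri b"
  shows "(\<exists>oc R. is_orthogonal_circle zi zj zk ri rj rk oc R) \<and>
         (\<forall>oc R. is_orthogonal_circle zi zj zk ri rj rk oc R \<longrightarrow> sphere oc R \<subseteq> pdisk)"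
proof -
  define vi vj vk where "vi = hyp_lift zi" and "vj = hyp_lift zj" and "vk = hyp_lift zk"
  have v: "vi \<in> hyperboloid" "vj \<in> hyperboloid" "vk \<in> hyperboloid"
    using hyp_lift_in_hyperboloid z by (simp_all add: vi_def vj_def vk_def)
  have edges: "lorentz vj vk = - cosh_edge rj rk a" "lorentz vk vi = - cosh_edge rk ri b"
    "lorentz vi vj = - cosh_edge ri rj c"
    using lorentz_hyp_lift z len cosh_inv_len r I by (simp_all add: vi_def vj_def vk_def)
  have Xi_form:
    "0 < Xi_form (cosh ri) (cosh rj) (cosh rk) (cosh_edge rj rk a) (cosh_edge rk ri b) (cosh_edge ri rj c)"
    "Xi_form (cosh ri) (cosh rj) (cosh rk) (cosh_edge rj rk a) (cosh_edge rk ri b) (cosh_edge ri rj c)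
       < gram (cosh_edge rj rk a) (cosh_edge rk ri b) (cosh_edge ri rj c)"
    using Xi Xi_less_gram[OF r I] by (simp_all flip: Xi_eq_Xi_form)
  obtain u \<rho> where u: "u \<in> hyperboloid" "\<rho> > 0" and uv: "lorentz u vi = - cosh \<rho> * cosh ri"
    "lorentz u vj = - cosh \<rho> * cosh rj" "lorentz u vk = - cosh \<rho> * cosh rk"
    by (rule exists_orthogonal_hcircle[OF v edges cosh_real_pos Xi_form])
  have "det3 vi vj vk \<noteq> 0"
    using det3_square_eq_gram[of vi vj vk] v edges Xi_form by (auto simp: hyperboloid_def)
  have orth_iff: "is_orthogonal_circle zi zj zk ri rj rk oc R \<longleftrightarrow> R > 0 \<and>
      orth_circ oc R (euclid_center vi ri) (euclid_radius vi ri) \<and>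
      orth_circ oc R (euclid_center vj rj) (euclid_radius vj rj) \<and>
      orth_circ oc R (euclid_center vk rk) (euclid_radius vk rk)" for oc R
    unfolding vi_def vj_def vk_def by (rule is_orthogonal_circle_iff[OF z r])
  have "is_orthogonal_circle zi zj zk ri rj rk (euclid_center u \<rho>) (euclid_radius u \<rho>)"
    by (simp add: orth_iff orth_circ_euclid_euclid_iff u v uv euclid_radius_pos)
  moreover have "sphere oc R \<subseteq> pdisk" if "is_orthogonal_circle zi zj zk ri rj rk oc R" for oc R
  proof -
    have "oc = euclid_center u \<rho> \<and> R = euclid_radius u \<rho>"
      using that u(2) unfolding orth_iff
      by (intro orthogonal_circle_unique[OF u(1) v \<open>det3 vi vj vk \<noteq> 0\<close> _ _ uv]) auto
    then show ?thesis using euclid_circle_subset_pdisk[OF u(1)] by simp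
  qed
  ultimately show ?thesis by blast
qed

lemma Xi_set_subset_Q_h:
  assumes "\<forall>f\<in>F. (\<forall>n<3. fv f n \<in> V \<and> fe f n \<in> E)"
  shows "Xi_set F fv fe E V \<subseteq> Q_h F fv fe E V"
proof
  fix Ir assume "Ir \<in> Xi_set F fv fe E V"
  then obtain I r where Ir: "Ir = (I, r)" and I: "\<forall>e\<in>E. I e > 1" and r: "\<forall>v\<in>V. r v > 0"
    and Xi: "\<forall>f\<in>F. face_Xi fv fe I r f > 0"
    unfolding Xi_set_def by auto
  have "strict_tri (inv_len (r (fv f 0)) (r (fv f 1)) (I (fe f 2)))
      (inv_len (r (fv f 1)) (r (fv f 2)) (I (fe f 0))) (inv_len (r (fv f 2)) (r (fv f 0)) (I (fe f 1)))"
    if "f \<in> F" for f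
  proof -
    have "fv f n \<in> V \<and> fe f n \<in> E" if "n < 3" for n
      using assms \<open>f \<in> F\<close> that by blast
    from this[of 0] this[of 1] this[of 2] show ?thesis
      using I r Xi \<open>f \<in> F\<close> by (intro face_strict_tri) (simp_all add: face_Xi_def)
  qed
  then show "Ir \<in> Q_h F fv fe E V"
    unfolding Q_h_def Ir using I r by auto
qed

theorem mainTheorem3:
  fixes F :: "'f set" and fv :: "'f \<Rightarrow> nat \<Rightarrow> 'v" and fe :: "'f \<Rightarrow> nat \<Rightarrow> 'e"
    and E :: "'e set" and V :: "'v set"
  assumes "\<forall>f\<in>F. (\<forall>n<3. fv f n \<in> V \<and> fe f n \<in> E)"
  shows "(\<forall>ri rj rk a b c :: real.
            ri > 0 \<and> rj > 0 \<and> rk > 0 \<and> a > 1 \<and> b > 1 \<and> c > 1 \<and> Xi ri rj rk a b c > 0 \<longrightarrow>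
            strict_tri (inv_len ri rj c) (inv_len rj rk a) (inv_len rk ri b) \<and>
            (\<forall>zi zj zk. zi \<in> pdisk \<and> zj \<in> pdisk \<and> zk \<in> pdisk \<and>
                hdist zi zj = inv_len ri rj c \<and> hdist zj zk = inv_len rj rk a \<and>
                hdist zk zi = inv_len rk ri b \<longrightarrow>
                (\<exists>oc R. is_orthogonal_circle zi zj zk ri rj rk oc R) \<and>
                (\<forall>oc R. is_orthogonal_circle zi zj zk ri rj rk oc R \<longrightarrow> sphere oc R \<subseteq> pdisk)))
         \<and> Xi_set F fv fe E V \<subseteq> Q_h F fv fe E V"
proof (intro conjI allI impI)
  fix ri rj rk a b c :: real
  assume "ri > 0 \<and> rj > 0 \<and> rk > 0 \<and> a > 1 \<and> b > 1 \<and> c > 1 \<and> Xi ri rj rk a b c > 0"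
  then have r: "ri > 0" "rj > 0" "rk > 0" and I: "a > 1" "b > 1" "c > 1" and Xi: "Xi ri rj rk a b c > 0"
    by simp_all
  show "strict_tri (inv_len ri rj c) (inv_len rj rk a) (inv_len rk ri b)"
    by (rule face_strict_tri[OF r I Xi])
  fix zi zj zk
  assume "zi \<in> pdisk \<and> zj \<in> pdisk \<and> zk \<in> pdisk \<and> hdist zi zj = inv_len ri rj c \<and>
    hdist zj zk = inv_len rj rk a \<and> hdist zk zi = inv_len rk ri b"
  then have "zi \<in> pdisk" "zj \<in> pdisk" "zk \<in> pdisk" "hdist zi zj = inv_len ri rj c"
    "hdist zj zk = inv_len rj rk a" "hdist zk zi = inv_len rk ri b"
    by simp_all
  note circle = face_orthogonal_circle[OF r I Xi this]
  then show "\<exists>oc R. is_orthogonal_circle zi zj zk ri rj rk oc R" by (rule conjunct1)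
  fix oc R
  assume "is_orthogonal_circle zi zj zk ri rj rk oc R"
  then show "sphere oc R \<subseteq> pdisk" using circle by blast
next
  show "Xi_set F fv fe E V \<subseteq> Q_h F fv fe E V"
    using assms by (rule Xi_set_subset_Q_h)
qed

end
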